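(* Let $k>0$ be sufficiently large and let $\theta^{(1)}$ be the angle function of the most contracted direction $e^{(1)}(y)=(\cos\theta^{(1)}(y),\sin\theta^{(1)}(y))$ of the standard map defined below. Then $\theta^{(1)}$ is strictly decreasing on $[0,1/2]$ ($e^{(1)}$ rotates clockwise) and strictly increasing on $[1/2,1]$ ($e^{(1)}$ rotates counter-clockwise); $\theta^{(1)}(0)=\theta^{(1)}(1)=\pi+\tfrac12\tan^{-1}\varphi(0)$ is close to $\pi$ (within order $1/k$, $e^{(1)}$ near the negative horizontal semi-axis) and $\theta^{(1)}(1/2)=\tfrac12\tan^{-1}\varphi(1/2)$ is close to $0$ (within order $1/k$, $e^{(1)}$ near the positive horizontal semi-axis); $e^{(1)}$ is along the negative diagonal ($\theta^{(1)}=3\pi/4$) at $y=\delta^-$ and $y=1-\delta^-$, vertical ($\theta^{(1)}=\pi/2$) at $y=\delta^*$ and $y=1-\delta^*$, and along the positive diagonal ($\theta^{(1)}=\pi/4$) at $y=\delta^+$ and $y=1-\delta^+$.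
   Context: Standard map $f_k(x,y)=(x+k\sin(2\pi y),\,x+y+k\sin(2\pi y))\bmod 1$; $\psi_c(y)=2\pi k\cos(2\pi y)$; $\varphi(y)=-\frac{4\psi_c+2}{2\psi_c^2+2\psi_c-1}$. $\delta^*=\frac1{2\pi}\cos^{-1}(-\frac{1}{4\pi k})$, $\delta^{\pm}=\frac1{2\pi}\cos^{-1}(-\frac{1\pm\sqrt3}{4\pi k})$, with $\cos^{-1}\in[0,\pi]$, $\tan^{-1}\in[-\pi/2,\pi/2]$ (and $\tan^{-1}(\pm\infty)=\pm\pi/2$). The angle function is $\theta^{(1)}(y)=\pi+\frac12\tan^{-1}\varphi(y)$ for $y\in[0,\delta^-]\cup[1-\delta^-,1]$, $\frac\pi2+\frac12\tan^{-1}\varphi(y)$ for $y\in[\delta^-,\delta^+]\cup[1-\delta^+,1-\delta^-]$, and $\frac12\tan^{-1}\varphi(y)$ for $y\in[\delta^+,1-\delta^+]$; for large $k$ the vector $(\cos\theta^{(1)},\sin\theta^{(1)})$ spans the most contracted direction of $Df_k$ at points with second coordinate $y$. *)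

theory Defs
  imports "HOL-Analysis.Analysis" "HOL-Library.Extended_Real"
begin

definition psi_c :: "real \<Rightarrow> real \<Rightarrow> real" where
  "psi_c k y = 2 * pi * k * cos (2 * pi * y)"

definition phi_den :: "real \<Rightarrow> real \<Rightarrow> real" where
  "phi_den k y = 2 * (psi_c k y)^2 + 2 * psi_c k y - 1"

definition phi :: "real \<Rightarrow> real \<Rightarrow> real" where
  "phi k y = - (4 * psi_c k y + 2) / phi_den k y"

definition delta_star :: "real \<Rightarrow> real" where
  "delta_star k = arccos (- 1 / (4 * pi * k)) / (2 * pi)"

definition delta_plus :: "real \<Rightarrow> real" where
  "delta_plus k = arccos (- (1 + sqrt 3) / (4 * pi * k)) / (2 * pi)"

definition delta_minus :: "real \<Rightarrow> real" where
  "delta_minus k = arccos (- (1 - sqrt 3) / (4 * pi * k)) / (2 * pi)"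

definition arctan_ext :: "ereal \<Rightarrow> real" where
  "arctan_ext x = (case x of ereal r \<Rightarrow> arctan r | PInfty \<Rightarrow> pi / 2 | MInfty \<Rightarrow> - pi / 2)"

definition phi_ext :: "real \<Rightarrow> real set \<Rightarrow> real \<Rightarrow> ereal" where
  "phi_ext k S y = (if phi_den k y \<noteq> 0 then ereal (phi k y)
                    else Lim (at y within S) (\<lambda>t. ereal (phi k t)))"

definition piece1 :: "real \<Rightarrow> real set" where
  "piece1 k = {0 .. delta_minus k} \<union> {1 - delta_minus k .. 1}"

definition piece2 :: "real \<Rightarrow> real set" where
  "piece2 k = {delta_minus k .. delta_plus k} \<union> {1 - delta_plus k .. 1 - delta_minus k}"

definition piece3 :: "real \<Rightarrow> real set" where
  "piece3 k = {delta_plus k .. 1 - delta_plus k}"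

definition theta1 :: "real \<Rightarrow> real \<Rightarrow> real" where
  "theta1 k y =
     (if y \<in> piece1 k then pi + arctan_ext (phi_ext k (piece1 k) y) / 2
      else if y \<in> piece2 k then pi / 2 + arctan_ext (phi_ext k (piece2 k) y) / 2
      else arctan_ext (phi_ext k (piece3 k) y) / 2)"

end

theory Submission
  imports Defs
begin

text \<open>Write \<open>\<phi> = \<Phi> \<circ> \<psi>\<^sub>c\<close> with the rational function \<open>\<Phi>(p) = -(4p+2)/(2p\<^sup>2+2p-1)\<close>.
  A difference quotient computation shows that \<open>\<Phi>\<close> is strictly increasing on each of the three
  intervals cut out by the roots \<open>\<rho>\<^sub>+ < \<rho>\<^sub>-\<close> of its denominator, while \<open>\<psi>\<^sub>c\<close> is strictly
  decreasing on \<open>[0,1/2]\<close> and takes the values \<open>\<rho>\<^sub>-, -1/2, \<rho>\<^sub>+\<close> at \<open>\<delta>\<^sup>-, \<delta>\<^sup>*, \<delta>\<^sup>+\<close>. Hence on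
  each of the three pieces of \<open>[0,1/2]\<close> the angle \<open>\<theta>\<close> is strictly decreasing, with values above
  \<open>3\<pi>/4\<close>, between \<open>\<pi>/4\<close> and \<open>3\<pi>/4\<close>, and below \<open>\<pi>/4\<close> respectively. At \<open>\<delta>\<^sup>-\<close> and \<open>\<delta>\<^sup>+\<close>
  the function \<open>\<phi>\<close> tends to \<open>-\<infinity>\<close> from within the piece, which gives the boundary values
  \<open>3\<pi>/4\<close> and \<open>\<pi>/4\<close> and hence strict monotonicity across the pieces. Everything is symmetric
  under \<open>y \<mapsto> 1 - y\<close>, and at \<open>y = 0, 1/2\<close> one has \<open>\<psi>\<^sub>c = \<plusminus>2\<pi>k\<close>, where \<open>|\<Phi>| = O(1/k)\<close>.\<close>

definition phi_rat :: "real \<Rightarrow> real" where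
  "phi_rat p = - (4 * p + 2) / (2 * p\<^sup>2 + 2 * p - 1)"

text \<open>These are the values of \<open>psi_c k\<close> at \<open>delta_minus k\<close> and \<open>delta_plus k\<close>.\<close>
definition rho_minus :: real where "rho_minus = (sqrt 3 - 1) / 2"
definition rho_plus :: real where "rho_plus = - (1 + sqrt 3) / 2"

lemma phi_eq_phi_rat_psi_c: "phi k y = phi_rat (psi_c k y)"
  by (simp add: phi_def phi_den_def phi_rat_def)

lemma phi_den_factor: "2 * p\<^sup>2 + 2 * p - 1 = 2 * ((p - rho_minus) * (p - rho_plus))"
  unfolding rho_minus_def rho_plus_def by (simp add: field_simps power2_eq_square)

lemma rho_bounds:
  "-2 < rho_plus" "rho_plus < -1/2" "0 < rho_minus" "rho_minus < 1"
  "4 * rho_minus + 2 = 2 * sqrt 3" "4 * rho_plus + 2 = - 2 * sqrt 3"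
proof -
  have "1 < sqrt (3::real)" "sqrt (3::real) < 3"
    by (simp_all add: real_less_rsqrt real_sqrt_less_iff[of 3 9, simplified])
  then show "-2 < rho_plus" "rho_plus < -1/2" "0 < rho_minus" "rho_minus < 1"
    "4 * rho_minus + 2 = 2 * sqrt 3" "4 * rho_plus + 2 = - 2 * sqrt 3"
    unfolding rho_minus_def rho_plus_def by (simp_all add: field_simps)
qed

lemma phi_rat_diff:
  assumes "2 * a\<^sup>2 + 2 * a - 1 \<noteq> 0" "2 * b\<^sup>2 + 2 * b - 1 \<noteq> 0"
  shows "phi_rat b - phi_rat a
    = 4 * (b - a) * (2 * a * b + a + b + 2) / ((2 * a\<^sup>2 + 2 * a - 1) * (2 * b\<^sup>2 + 2 * b - 1))"
  using assms unfolding phi_rat_def by (simp add: field_simps) (simp add: algebra_simps power2_eq_square)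

lemma phi_rat_less:
  assumes "a < b" "0 < (2 * a\<^sup>2 + 2 * a - 1) * (2 * b\<^sup>2 + 2 * b - 1)" "0 < 2 * a * b + a + b + 2"
  shows "phi_rat a < phi_rat b"
proof -
  have "0 < phi_rat b - phi_rat a"
    using assms by (subst phi_rat_diff) (auto intro!: divide_pos_pos)
  then show ?thesis by simp
qed

lemma strict_mono_on_phi_rat_above: "strict_mono_on {rho_minus<..} phi_rat"
proof (rule strict_mono_onI)
  fix a b assume ab: "a \<in> {rho_minus<..}" "b \<in> {rho_minus<..}" "a < b"
  then have "0 < 2 * a\<^sup>2 + 2 * a - 1" "0 < 2 * b\<^sup>2 + 2 * b - 1"
    unfolding phi_den_factor using rho_bounds by (auto intro!: mult_pos_pos)
  moreover have "0 < a" "0 < b" using ab rho_bounds by auto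
  then have "0 < 2 * a * b + a + b + 2" by (simp add: add_pos_pos)
  ultimately show "phi_rat a < phi_rat b"
    using ab by (intro phi_rat_less mult_pos_pos) auto
qed

lemma strict_mono_on_phi_rat_between: "strict_mono_on {rho_plus<..<rho_minus} phi_rat"
proof (rule strict_mono_onI)
  fix a b assume ab: "a \<in> {rho_plus<..<rho_minus}" "b \<in> {rho_plus<..<rho_minus}" "a < b"
  then have den: "2 * a\<^sup>2 + 2 * a - 1 < 0" "2 * b\<^sup>2 + 2 * b - 1 < 0"
    unfolding phi_den_factor by (auto simp: mult_less_0_iff)
  \<comment> \<open>\<open>2ab + a + b + 2 = ((a + 1/2) + (b + 1/2))\<^sup>2 + (3/4 - (a + 1/2)\<^sup>2) + (3/4 - (b + 1/2)\<^sup>2)\<close>,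
    where \<open>3/4 - (p + 1/2)\<^sup>2 = -(2p\<^sup>2 + 2p - 1)/2 > 0\<close> for \<open>p = a, b\<close>.\<close>
  have "0 \<le> ((a + 1/2) + (b + 1/2))\<^sup>2" by simp
  then have "0 < 2 * a * b + a + b + 2"
    using den by (simp add: power2_eq_square algebra_simps)
  with ab den show "phi_rat a < phi_rat b"
    by (intro phi_rat_less) (auto intro: mult_neg_neg)
qed

lemma strict_mono_on_phi_rat_below: "strict_mono_on {..<rho_plus} phi_rat"
proof (rule strict_mono_onI)
  fix a b assume ab: "a \<in> {..<rho_plus}" "b \<in> {..<rho_plus}" "a < b"
  then have "0 < 2 * a\<^sup>2 + 2 * a - 1" "0 < 2 * b\<^sup>2 + 2 * b - 1"
    unfolding phi_den_factor using rho_bounds by (auto intro!: mult_neg_neg)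
  moreover have "0 < (a + 1/2) * (b + 1/2)" using ab rho_bounds by (auto intro!: mult_neg_neg)
  then have "0 < 2 * a * b + a + b + 2" by (simp add: algebra_simps)
  ultimately show "phi_rat a < phi_rat b"
    using ab by (intro phi_rat_less mult_pos_pos) auto
qed

lemma filterlim_neg_divide_at_bot:
  fixes f g :: "'a \<Rightarrow> real"
  assumes f: "(f \<longlongrightarrow> c) F" and "c \<noteq> 0" and g: "(g \<longlongrightarrow> 0) F"
    and sign: "eventually (\<lambda>x. 0 < c * g x) F"
  shows "LIM x F. - f x / g x :> at_bot"
proof (cases "0 < c")
  case True
  have "eventually (\<lambda>x. 0 < g x) F"
    using sign by (rule eventually_mono) (use True in \<open>simp add: zero_less_mult_iff\<close>)
  then have "LIM x F. f x * inverse (g x) :> at_top"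
    using f True g by (intro filterlim_tendsto_pos_mult_at_top filterlim_inverse_at_top)
  then show ?thesis by (simp add: filterlim_uminus_at_bot divide_inverse)
next
  case False
  with \<open>c \<noteq> 0\<close> have "c < 0" by simp
  have "eventually (\<lambda>x. 0 < - g x) F"
    using sign by (rule eventually_mono) (use \<open>c < 0\<close> in \<open>simp add: zero_less_mult_iff\<close>)
  then have "LIM x F. f x * inverse (- g x) :> at_bot"
    using f \<open>c < 0\<close> tendsto_minus[OF g]
    by (intro filterlim_tendsto_neg_mult_at_bot filterlim_inverse_at_top) auto
  then show ?thesis by (simp add: divide_inverse)
qed

lemma filterlim_phi_rat_at_right_rho_minus: "LIM p at_right rho_minus. phi_rat p :> at_bot"
  unfolding phi_rat_def
proof (rule filterlim_neg_divide_at_bot)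
  show "((\<lambda>p. 4 * p + 2) \<longlongrightarrow> 2 * sqrt 3) (at_right rho_minus)"
    using rho_bounds by (auto intro!: tendsto_eq_intros)
  show "2 * sqrt 3 \<noteq> 0" by simp
  show "((\<lambda>p. 2 * p\<^sup>2 + 2 * p - 1) \<longlongrightarrow> 0) (at_right rho_minus)"
    unfolding phi_den_factor by (auto intro!: tendsto_eq_intros)
  show "\<forall>\<^sub>F p in at_right rho_minus. 0 < 2 * sqrt 3 * (2 * p\<^sup>2 + 2 * p - 1)"
    using eventually_at_right_less unfolding phi_den_factor
    by (rule eventually_mono) (use rho_bounds in \<open>auto intro!: mult_pos_pos\<close>)
qed

lemma filterlim_phi_rat_at_right_rho_plus: "LIM p at_right rho_plus. phi_rat p :> at_bot"
  unfolding phi_rat_def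
proof (rule filterlim_neg_divide_at_bot)
  show "((\<lambda>p. 4 * p + 2) \<longlongrightarrow> - 2 * sqrt 3) (at_right rho_plus)"
    using rho_bounds by (auto intro!: tendsto_eq_intros)
  show "- 2 * sqrt 3 \<noteq> 0" by simp
  show "((\<lambda>p. 2 * p\<^sup>2 + 2 * p - 1) \<longlongrightarrow> 0) (at_right rho_plus)"
    unfolding phi_den_factor by (auto intro!: tendsto_eq_intros)
  have "rho_plus < rho_minus" using rho_bounds by simp
  then show "\<forall>\<^sub>F p in at_right rho_plus. 0 < - 2 * sqrt 3 * (2 * p\<^sup>2 + 2 * p - 1)"
    unfolding eventually_at_right_field phi_den_factor
    by (auto intro!: exI[of _ rho_minus] simp: mult_less_0_iff)
qed

lemma abs_phi_rat_le:
  assumes "6 \<le> A"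
  shows "\<bar>phi_rat A\<bar> \<le> 3 / A" "\<bar>phi_rat (- A)\<bar> \<le> 3 / A"
proof -
  have "6 * A \<le> A * A" using assms by (intro mult_right_mono) auto
  then have "4 * (A * A) + 2 * A \<le> 6 * (A * A) + 6 * A - 3"
    "4 * (A * A) - 2 * A \<le> 6 * (A * A) - 6 * A - 3"
    "0 < 2 * (A * A) - 2 * A - 1"
    using assms by linarith+
  then show "\<bar>phi_rat A\<bar> \<le> 3 / A" "\<bar>phi_rat (- A)\<bar> \<le> 3 / A"
    using assms unfolding phi_rat_def
    by (simp_all add: abs_div pos_divide_le_eq le_divide_eq power2_eq_square algebra_simps)
qed

lemma psi_c_reflect: "psi_c k (1 - y) = psi_c k y"
proof -
  have "cos (2 * pi * (1 - y)) = cos (2 * pi * y)"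
    by (simp add: right_diff_distrib cos_diff)
  then show ?thesis by (simp add: psi_c_def)
qed

lemma phi_reflect: "phi k (1 - y) = phi k y"
  by (simp add: phi_eq_phi_rat_psi_c psi_c_reflect)

lemma phi_den_reflect: "phi_den k (1 - y) = phi_den k y"
  by (simp add: phi_den_def psi_c_reflect)

lemma psi_c_less_iff:
  assumes "0 < k" "y \<in> {0..1/2}" "z \<in> {0..1/2}"
  shows "psi_c k y < psi_c k z \<longleftrightarrow> z < y"
proof -
  have "psi_c k y < psi_c k z \<longleftrightarrow> cos (2 * pi * y) < cos (2 * pi * z)"
    using assms(1) by (simp add: psi_c_def mult.assoc)
  also have "\<dots> \<longleftrightarrow> z < y"
    using assms by (subst cos_mono_less_eq) auto
  finally show ?thesis .
qed

lemma psi_c_arccos: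
  assumes "1 \<le> k" "\<bar>r\<bar> \<le> 2"
  defines "y \<equiv> arccos (r / (2 * pi * k)) / (2 * pi)"
  shows "psi_c k y = r" "y \<in> {0..1/2}"
proof -
  have "2 \<le> 2 * pi * k" using assms(1) pi_gt3 mult_mono[of 1 pi 1 k] by simp
  then have bound: "\<bar>r / (2 * pi * k)\<bar> \<le> 1"
    using assms(2) by (simp add: abs_div divide_le_eq)
  then show "psi_c k y = r"
    using assms(1) by (simp add: y_def psi_c_def cos_arccos_abs)
  from bound have "-1 \<le> r / (2 * pi * k)" "r / (2 * pi * k) \<le> 1"
    by (simp_all only: abs_le_iff) linarith+
  then have "arccos (r / (2 * pi * k)) \<in> {0..pi}"
    by (auto intro: arccos_lbound arccos_ubound)
  then show "y \<in> {0..1/2}" by (simp add: y_def field_simps)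
qed

lemma
  assumes "1 \<le> k"
  shows psi_c_delta_minus: "psi_c k (delta_minus k) = rho_minus"
    and psi_c_delta_star: "psi_c k (delta_star k) = - 1/2"
    and psi_c_delta_plus: "psi_c k (delta_plus k) = rho_plus"
    and delta_minus_in: "delta_minus k \<in> {0..1/2}"
    and delta_star_in: "delta_star k \<in> {0..1/2}"
    and delta_plus_in: "delta_plus k \<in> {0..1/2}"
proof -
  have "\<bar>rho_minus\<bar> \<le> 2" "\<bar>- 1/2 :: real\<bar> \<le> 2" "\<bar>rho_plus\<bar> \<le> 2"
    using rho_bounds by auto
  note arccos_points = this[THEN psi_c_arccos(1)[OF assms]] this[THEN psi_c_arccos(2)[OF assms]]
  have "delta_minus k = arccos (rho_minus / (2 * pi * k)) / (2 * pi)"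
    "delta_star k = arccos ((- 1/2) / (2 * pi * k)) / (2 * pi)"
    "delta_plus k = arccos (rho_plus / (2 * pi * k)) / (2 * pi)"
    by (simp_all add: delta_minus_def delta_star_def delta_plus_def rho_minus_def rho_plus_def
        field_simps)
  then show "psi_c k (delta_minus k) = rho_minus" "psi_c k (delta_star k) = - 1/2"
    "psi_c k (delta_plus k) = rho_plus" "delta_minus k \<in> {0..1/2}"
    "delta_star k \<in> {0..1/2}" "delta_plus k \<in> {0..1/2}"
    using arccos_points by simp_all
qed

lemma delta_order:
  assumes "1 \<le> k"
  shows "0 < delta_minus k" "delta_minus k < delta_star k" "delta_star k < delta_plus k"
    "delta_plus k < 1/2"
proof -
  have psi_less_imp: "z < y" if "y \<in> {0..1/2}" "z \<in> {0..1/2}" "psi_c k y < psi_c k z" for y z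
    using psi_c_less_iff[of k y z] assms that by simp
  have "2 \<le> 2 * pi * k" using assms pi_gt3 mult_mono[of 1 pi 1 k] by simp
  then have "psi_c k (1/2) < rho_plus" and "rho_minus < psi_c k 0"
    using rho_bounds by (simp_all add: psi_c_def)
  note psi_vals = psi_c_delta_minus[OF assms] psi_c_delta_star[OF assms] psi_c_delta_plus[OF assms]
  note ins = delta_minus_in[OF assms] delta_star_in[OF assms] delta_plus_in[OF assms]
  show "0 < delta_minus k"
    using psi_less_imp[OF ins(1), of 0] \<open>rho_minus < psi_c k 0\<close> psi_vals by simp
  show "delta_minus k < delta_star k"
    using psi_less_imp[OF ins(2,1)] psi_vals rho_bounds by simp
  show "delta_star k < delta_plus k"
    using psi_less_imp[OF ins(3,2)] psi_vals rho_bounds by simp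
  show "delta_plus k < 1/2"
    using psi_less_imp[of "1/2"] ins(3) \<open>psi_c k (1/2) < rho_plus\<close> psi_vals by simp
qed

lemma psi_c_compare_deltas:
  assumes "1 \<le> k" "y \<in> {0..1/2}"
  shows "rho_minus < psi_c k y \<longleftrightarrow> y < delta_minus k"
    "psi_c k y < rho_minus \<longleftrightarrow> delta_minus k < y"
    "rho_plus < psi_c k y \<longleftrightarrow> y < delta_plus k"
    "psi_c k y < rho_plus \<longleftrightarrow> delta_plus k < y"
proof -
  have k: "0 < k" using assms(1) by simp
  note dm = delta_minus_in[OF assms(1)] and dp = delta_plus_in[OF assms(1)]
  show "rho_minus < psi_c k y \<longleftrightarrow> y < delta_minus k"
    using psi_c_less_iff[OF k dm assms(2)] by (simp add: psi_c_delta_minus[OF assms(1)])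
  show "psi_c k y < rho_minus \<longleftrightarrow> delta_minus k < y"
    using psi_c_less_iff[OF k assms(2) dm] by (simp add: psi_c_delta_minus[OF assms(1)])
  show "rho_plus < psi_c k y \<longleftrightarrow> y < delta_plus k"
    using psi_c_less_iff[OF k dp assms(2)] by (simp add: psi_c_delta_plus[OF assms(1)])
  show "psi_c k y < rho_plus \<longleftrightarrow> delta_plus k < y"
    using psi_c_less_iff[OF k assms(2) dp] by (simp add: psi_c_delta_plus[OF assms(1)])
qed

lemma phi_den_eq: "phi_den k y = 2 * ((psi_c k y - rho_minus) * (psi_c k y - rho_plus))"
  unfolding phi_den_def by (rule phi_den_factor)

lemma phi_den_signs:
  assumes "1 \<le> k" "y \<in> {0..1/2}"
  shows "y < delta_minus k \<Longrightarrow> 0 < phi_den k y"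
    "delta_minus k < y \<Longrightarrow> y < delta_plus k \<Longrightarrow> phi_den k y < 0"
    "delta_plus k < y \<Longrightarrow> 0 < phi_den k y"
  using psi_c_compare_deltas[OF assms] delta_order[OF assms(1)] rho_bounds
  unfolding phi_den_eq by (auto simp: zero_less_mult_iff mult_less_0_iff)

lemma phi_den_nonzero:
  assumes "1 \<le> k" "y \<in> {0..1/2}" "y \<noteq> delta_minus k" "y \<noteq> delta_plus k"
  shows "phi_den k y \<noteq> 0"
  using phi_den_signs[OF assms(1,2)] assms(3,4) by (cases "y < delta_minus k"; cases "y < delta_plus k") auto

lemma
  assumes "1 \<le> k" "y \<in> {0..1/2}"
  shows theta1_below_delta_minus: "y < delta_minus k \<Longrightarrow> theta1 k y = pi + arctan (phi k y) / 2"
    and theta1_between_deltas: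
      "delta_minus k < y \<Longrightarrow> y < delta_plus k \<Longrightarrow> theta1 k y = pi / 2 + arctan (phi k y) / 2"
    and theta1_above_delta_plus: "delta_plus k < y \<Longrightarrow> theta1 k y = arctan (phi k y) / 2"
  using phi_den_signs[OF assms] delta_order[OF assms(1)] assms(2)
  by (auto simp: theta1_def phi_ext_def arctan_ext_def piece1_def piece2_def)

lemma phi_ext_eq_MInfty:
  assumes "phi_den k a = 0" "at a within S \<noteq> bot" "LIM t at a within S. phi k t :> at_bot"
  shows "phi_ext k S a = -\<infinity>"
proof -
  have "((ereal \<circ> phi k) \<longlongrightarrow> -\<infinity>) (at a within S)"
    using assms(3) by (simp only: ereal_tendsto_simps2)
  with assms(2) have "Lim (at a within S) (\<lambda>t. ereal (phi k t)) = -\<infinity>"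
    by (intro tendsto_Lim) (auto simp: o_def)
  with assms(1) show ?thesis by (simp add: phi_ext_def)
qed

lemma filterlim_phi_at_singularity:
  assumes "0 < k" "a \<in> {0<..<1/2}" "S \<inter> {..<1 - a} \<subseteq> {0..a}"
    and "LIM p at_right (psi_c k a). phi_rat p :> at_bot"
  shows "LIM t at a within S. phi k t :> at_bot"
proof -
  have "eventually (\<lambda>t. psi_c k a < psi_c k t) (at a within S)"
    unfolding eventually_at
  proof (intro exI[of _ "1 - 2 * a"] conjI ballI impI)
    show "0 < 1 - 2 * a" using assms(2) by simp
    fix t assume "t \<in> S" "t \<noteq> a \<and> dist t a < 1 - 2 * a"
    then have "t \<in> {0..1/2}" "t < a"
      using assms(2,3) by (auto simp: dist_real_def)
    then show "psi_c k a < psi_c k t"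
      using psi_c_less_iff[OF assms(1), of a t] assms(2) by simp
  qed
  moreover have "(psi_c k \<longlongrightarrow> psi_c k a) (at a within S)"
    unfolding psi_c_def by (intro tendsto_intros)
  ultimately have "LIM t at a within S. psi_c k t :> at_right (psi_c k a)"
    by (intro tendsto_imp_filterlim_at_right)
  then show ?thesis
    unfolding phi_eq_phi_rat_psi_c by (rule filterlim_compose[OF assms(4)])
qed

lemma filterlim_phi_reflect:
  assumes "\<And>t. t \<in> S \<Longrightarrow> 1 - t \<in> S" and "LIM t at a within S. phi k t :> at_bot"
  shows "LIM t at (1 - a) within S. phi k t :> at_bot"
proof -
  have "eventually (\<lambda>t. 1 - t \<in> S \<and> 1 - t \<noteq> a) (at (1 - a) within S)"
    using assms(1) by (auto simp: eventually_at_filter)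
  moreover have "((\<lambda>t. 1 - t) \<longlongrightarrow> a) (at (1 - a) within S)"
    by (auto intro!: tendsto_eq_intros)
  ultimately have "LIM t at (1 - a) within S. 1 - t :> at a within S"
    by (simp add: filterlim_at)
  then have "LIM t at (1 - a) within S. phi k (1 - t) :> at_bot"
    by (rule filterlim_compose[OF assms(2)])
  then show ?thesis by (simp add: phi_reflect)
qed

lemma piece_reflect: "1 - y \<in> piece1 k \<longleftrightarrow> y \<in> piece1 k" "1 - y \<in> piece2 k \<longleftrightarrow> y \<in> piece2 k"
  by (auto simp: piece1_def piece2_def)

lemma at_within_neq_bot_if_Icc_subset:
  fixes a u v :: real
  assumes "u < v" "a \<in> {u..v}" "{u..v} \<subseteq> S"
  shows "at a within S \<noteq> bot"
  using assms islimpt_subset[of a "{u..v}" S] by (simp add: trivial_limit_within)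

lemma
  assumes "1 \<le> k"
  shows theta1_delta_minus: "theta1 k (delta_minus k) = 3 * pi / 4"
    and theta1_reflect_delta_minus: "theta1 k (1 - delta_minus k) = 3 * pi / 4"
proof -
  note order = delta_order[OF assms]
  have lim: "LIM t at (delta_minus k) within piece1 k. phi k t :> at_bot"
    using order assms filterlim_phi_rat_at_right_rho_minus
    by (intro filterlim_phi_at_singularity) (auto simp: piece1_def psi_c_delta_minus)
  have theta_singular: "theta1 k a = 3 * pi / 4"
    if "a \<in> piece1 k" "phi_den k a = 0" "at a within piece1 k \<noteq> bot"
      "LIM t at a within piece1 k. phi k t :> at_bot" for a
    using phi_ext_eq_MInfty[OF that(2-4)] that(1)
    by (simp add: theta1_def arctan_ext_def)
  have den: "phi_den k (delta_minus k) = 0"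
    by (simp add: phi_den_eq psi_c_delta_minus[OF assms])
  show "theta1 k (delta_minus k) = 3 * pi / 4"
    using order by (intro theta_singular den lim at_within_neq_bot_if_Icc_subset[of 0 "delta_minus k"])
      (auto simp: piece1_def)
  show "theta1 k (1 - delta_minus k) = 3 * pi / 4"
    using order by (intro theta_singular filterlim_phi_reflect[OF _ lim]
        at_within_neq_bot_if_Icc_subset[of "1 - delta_minus k" 1])
      (auto simp: piece1_def piece_reflect phi_den_reflect den)
qed

lemma
  assumes "1 \<le> k"
  shows theta1_delta_plus: "theta1 k (delta_plus k) = pi / 4"
    and theta1_reflect_delta_plus: "theta1 k (1 - delta_plus k) = pi / 4"
proof -
  note order = delta_order[OF assms]
  have lim: "LIM t at (delta_plus k) within piece2 k. phi k t :> at_bot"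
    using order assms filterlim_phi_rat_at_right_rho_plus
    by (intro filterlim_phi_at_singularity) (auto simp: piece2_def psi_c_delta_plus)
  have theta_singular: "theta1 k a = pi / 4"
    if "a \<notin> piece1 k" "a \<in> piece2 k" "phi_den k a = 0" "at a within piece2 k \<noteq> bot"
      "LIM t at a within piece2 k. phi k t :> at_bot" for a
    using phi_ext_eq_MInfty[OF that(3-5)] that(1,2)
    by (simp add: theta1_def arctan_ext_def)
  have den: "phi_den k (delta_plus k) = 0"
    by (simp add: phi_den_eq psi_c_delta_plus[OF assms])
  show "theta1 k (delta_plus k) = pi / 4"
    using order
    by (intro theta_singular den lim at_within_neq_bot_if_Icc_subset[of "delta_minus k" "delta_plus k"])
      (auto simp: piece1_def piece2_def)
  show "theta1 k (1 - delta_plus k) = pi / 4"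
    using order by (intro theta_singular filterlim_phi_reflect[OF _ lim]
        at_within_neq_bot_if_Icc_subset[of "1 - delta_plus k" "1 - delta_minus k"])
      (auto simp: piece1_def piece2_def piece_reflect phi_den_reflect den)
qed

lemma theta1_reflect_regular:
  assumes "phi_den k y \<noteq> 0"
  shows "theta1 k (1 - y) = theta1 k y"
  using assms by (simp add: theta1_def phi_ext_def piece_reflect phi_reflect phi_den_reflect)

lemma theta1_reflect:
  assumes "1 \<le> k" "y \<in> {0..1/2}"
  shows "theta1 k (1 - y) = theta1 k y"
proof -
  consider "y = delta_minus k" | "y = delta_plus k" | "phi_den k y \<noteq> 0"
    using phi_den_nonzero[OF assms] by blast
  then show ?thesis
    by cases (simp_all add: assms(1) theta1_delta_minus theta1_reflect_delta_minus theta1_delta_plus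
        theta1_reflect_delta_plus theta1_reflect_regular)
qed

lemma theta1_ranges:
  assumes "1 \<le> k" "y \<in> {0..1/2}"
  shows "y < delta_minus k \<Longrightarrow> 3 * pi / 4 < theta1 k y"
    "delta_minus k < y \<Longrightarrow> y < delta_plus k \<Longrightarrow> pi / 4 < theta1 k y \<and> theta1 k y < 3 * pi / 4"
    "delta_plus k < y \<Longrightarrow> theta1 k y < pi / 4"
  using theta1_below_delta_minus[OF assms] theta1_between_deltas[OF assms]
    theta1_above_delta_plus[OF assms] arctan_bounded[of "phi k y"]
  by auto

lemma theta1_decreasing_within_regions:
  assumes "1 \<le> k" "x \<in> {0..1/2}" "y \<in> {0..1/2}" "x < y"
  shows "y < delta_minus k \<Longrightarrow> theta1 k y < theta1 k x"
    "delta_minus k < x \<Longrightarrow> y < delta_plus k \<Longrightarrow> theta1 k y < theta1 k x"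
    "delta_plus k < x \<Longrightarrow> theta1 k y < theta1 k x"
proof -
  have psi: "psi_c k y < psi_c k x"
    using psi_c_less_iff[of k y x] assms by simp
  have arctan_less: "arctan (phi k y) < arctan (phi k x)"
    if "strict_mono_on I phi_rat" "psi_c k x \<in> I" "psi_c k y \<in> I" for I
    using strict_mono_onD[OF that(1,3,2) psi] by (simp add: phi_eq_phi_rat_psi_c arctan_less_iff)
  note cmp_x = psi_c_compare_deltas[OF assms(1,2)] and cmp_y = psi_c_compare_deltas[OF assms(1,3)]
  show "y < delta_minus k \<Longrightarrow> theta1 k y < theta1 k x"
    using arctan_less[OF strict_mono_on_phi_rat_above] cmp_x cmp_y assms
      theta1_below_delta_minus[OF assms(1,2)] theta1_below_delta_minus[OF assms(1,3)]
    by simp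
  show "delta_minus k < x \<Longrightarrow> y < delta_plus k \<Longrightarrow> theta1 k y < theta1 k x"
    using arctan_less[OF strict_mono_on_phi_rat_between] cmp_x cmp_y assms
      theta1_between_deltas[OF assms(1,2)] theta1_between_deltas[OF assms(1,3)]
    by simp
  show "delta_plus k < x \<Longrightarrow> theta1 k y < theta1 k x"
    using arctan_less[OF strict_mono_on_phi_rat_below] cmp_x cmp_y assms
      theta1_above_delta_plus[OF assms(1,2)] theta1_above_delta_plus[OF assms(1,3)]
    by simp
qed

lemma strict_antimono_on_theta1:
  assumes "1 \<le> k"
  shows "strict_antimono_on {0..1/2} (theta1 k)"
proof (rule monotone_onI)
  fix x y :: real assume xy: "x \<in> {0..1/2}" "y \<in> {0..1/2}" "x < y"
  note singular_values = theta1_delta_minus[OF assms] theta1_delta_plus[OF assms]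
  note ranges = theta1_ranges[OF assms xy(1)] theta1_ranges[OF assms xy(2)]
  note within = theta1_decreasing_within_regions[OF assms xy]
  have "x < delta_minus k \<or> x = delta_minus k \<or> delta_minus k < x \<and> x < delta_plus k
      \<or> x = delta_plus k \<or> delta_plus k < x"
    "y < delta_minus k \<or> y = delta_minus k \<or> delta_minus k < y \<and> y < delta_plus k
      \<or> y = delta_plus k \<or> delta_plus k < y"
    by linarith+
  then show "theta1 k y < theta1 k x"
    using singular_values ranges within xy(3) delta_order[OF assms] pi_gt3 by (elim disjE conjE; auto)
qed

lemma strict_mono_on_theta1:
  assumes "1 \<le> k"
  shows "strict_mono_on {1/2..1} (theta1 k)"
proof (rule strict_mono_onI)
  fix x y :: real assume xy: "x \<in> {1/2..1}" "y \<in> {1/2..1}" "x < y"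
  then have "theta1 k (1 - x) < theta1 k (1 - y)"
    using strict_antimono_on_theta1[OF assms] by (auto simp: monotone_on_def)
  moreover have "theta1 k (1 - (1 - x)) = theta1 k (1 - x)" "theta1 k (1 - (1 - y)) = theta1 k (1 - y)"
    using xy by (intro theta1_reflect[OF assms]; simp)+
  ultimately show "theta1 k x < theta1 k y" by simp
qed

lemma abs_phi_0_half_le:
  assumes "1 \<le> k"
  shows "\<bar>phi k 0\<bar> \<le> 1 / k" "\<bar>phi k (1/2)\<bar> \<le> 1 / k"
proof -
  have "6 \<le> 2 * pi * k" using assms pi_gt3 mult_mono[of 3 pi 1 k] by simp
  moreover have "3 / (2 * pi * k) \<le> 1 / k" using assms pi_gt3 by (simp add: field_simps)
  ultimately show "\<bar>phi k 0\<bar> \<le> 1 / k" "\<bar>phi k (1/2)\<bar> \<le> 1 / k"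
    using abs_phi_rat_le[of "2 * pi * k"] by (simp_all add: phi_eq_phi_rat_psi_c psi_c_def)
qed

lemma
  assumes "1 \<le> k"
  shows theta1_delta_star: "theta1 k (delta_star k) = pi / 2"
    and theta1_reflect_delta_star: "theta1 k (1 - delta_star k) = pi / 2"
proof -
  have "phi k (delta_star k) = 0"
    by (simp add: phi_eq_phi_rat_psi_c psi_c_delta_star[OF assms] phi_rat_def)
  then show "theta1 k (delta_star k) = pi / 2"
    using theta1_between_deltas[OF assms delta_star_in[OF assms]] delta_order[OF assms] by simp
  then show "theta1 k (1 - delta_star k) = pi / 2"
    using theta1_reflect[OF assms delta_star_in[OF assms]] by simp
qed

theorem mainTheorem3:
  "\<exists>K C. \<forall>k \<ge> K.
     strict_antimono_on {0 .. 1/2} (theta1 k) \<and>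
     strict_mono_on {1/2 .. 1} (theta1 k) \<and>
     theta1 k 0 = pi + arctan (phi k 0) / 2 \<and>
     theta1 k 1 = pi + arctan (phi k 0) / 2 \<and>
     \<bar>theta1 k 0 - pi\<bar> \<le> C / k \<and>
     theta1 k (1/2) = arctan (phi k (1/2)) / 2 \<and>
     \<bar>theta1 k (1/2)\<bar> \<le> C / k \<and>
     theta1 k (delta_minus k) = 3 * pi / 4 \<and>
     theta1 k (1 - delta_minus k) = 3 * pi / 4 \<and>
     theta1 k (delta_star k) = pi / 2 \<and>
     theta1 k (1 - delta_star k) = pi / 2 \<and>
     theta1 k (delta_plus k) = pi / 4 \<and>
     theta1 k (1 - delta_plus k) = pi / 4"
proof (intro exI[of _ 1] allI impI)
  fix k :: real assume k: "1 \<le> k"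
  have at_0: "theta1 k 0 = pi + arctan (phi k 0) / 2"
    using theta1_below_delta_minus[OF k, of 0] delta_order[OF k] by simp
  have at_1: "theta1 k 1 = theta1 k 0"
    using theta1_reflect[OF k, of 0] by simp
  have at_half: "theta1 k (1/2) = arctan (phi k (1/2)) / 2"
    using theta1_above_delta_plus[OF k, of "1/2"] delta_order[OF k] by simp
  have "\<bar>arctan (phi k 0)\<bar> \<le> 1 / k" "\<bar>arctan (phi k (1/2))\<bar> \<le> 1 / k"
    using abs_arctan_le abs_phi_0_half_le[OF k] order_trans by blast+
  with at_0 at_half have "\<bar>theta1 k 0 - pi\<bar> \<le> 1 / k" "\<bar>theta1 k (1/2)\<bar> \<le> 1 / k"
    by linarith+
  with at_0 at_1 at_half k show "strict_antimono_on {0 .. 1/2} (theta1 k) \<and>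
     strict_mono_on {1/2 .. 1} (theta1 k) \<and>
     theta1 k 0 = pi + arctan (phi k 0) / 2 \<and>
     theta1 k 1 = pi + arctan (phi k 0) / 2 \<and>
     \<bar>theta1 k 0 - pi\<bar> \<le> 1 / k \<and>
     theta1 k (1/2) = arctan (phi k (1/2)) / 2 \<and>
     \<bar>theta1 k (1/2)\<bar> \<le> 1 / k \<and>
     theta1 k (delta_minus k) = 3 * pi / 4 \<and>
     theta1 k (1 - delta_minus k) = 3 * pi / 4 \<and>
     theta1 k (delta_star k) = pi / 2 \<and>
     theta1 k (1 - delta_star k) = pi / 2 \<and>
     theta1 k (delta_plus k) = pi / 4 \<and>
     theta1 k (1 - delta_plus k) = pi / 4"
    by (simp add: strict_antimono_on_theta1 strict_mono_on_theta1 theta1_delta_minus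
        theta1_reflect_delta_minus theta1_delta_star theta1_reflect_delta_star theta1_delta_plus
        theta1_reflect_delta_plus)
qed

end
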